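(* $m_2^{(2)}(5,3)=8$.
   Context: For a prime power $q$ and $N\ge1$, a multiset of points in $\mathrm{PG}(N,q)$ is a map $\mathcal{K}$ from the points to $\mathbb{Z}_{\ge0}$, with $\mathcal{K}(S)=\sum_{P\in S}\mathcal{K}(P)$; its cardinality is $\mathcal{K}(\mathrm{PG}(N,q))$. Dimensions are projective (planes have dimension 2). For $0\le r\le N-1$ and a positive integer $w$, $m_q^{(r)}(N,w)$ is the maximum cardinality of a multiset of points in $\mathrm{PG}(N,q)$ such that every $r$-dimensional subspace has multiplicity at most $w$. *)

theory Defs
  imports Complex_Main "HOL-Library.Function_Algebras"
begin

(* Vectors of F^(N+1) are represented as functions nat => F with coordinates
   0..N, i.e. vanishing at every index > N. *)

definition scal :: "'a::field \<Rightarrow> (nat \<Rightarrow> 'a) \<Rightarrow> (nat \<Rightarrow> 'a)" where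
  "scal c v = (\<lambda>i. c * v i)"

definition vecs :: "nat \<Rightarrow> (nat \<Rightarrow> 'a::field) set" where
  "vecs N = {v. \<forall>i>N. v i = 0}"

definition lin_subspace :: "nat \<Rightarrow> nat \<Rightarrow> (nat \<Rightarrow> 'a::field) set \<Rightarrow> bool" where
  "lin_subspace N d W \<longleftrightarrow> W \<subseteq> vecs N \<and> module.subspace scal W \<and> vector_space.dim scal W = d"

definition PG_points :: "nat \<Rightarrow> (nat \<Rightarrow> 'a::field) set set" where
  "PG_points N = {P. lin_subspace N 1 P}"

(* projective r-dimensional subspaces of PG(N,F): (r+1)-dimensional linear subspaces *)
definition PG_subspaces :: "nat \<Rightarrow> nat \<Rightarrow> (nat \<Rightarrow> 'a::field) set set" where
  "PG_subspaces N r = {W. lin_subspace N (r + 1) W}"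

definition points_in :: "nat \<Rightarrow> (nat \<Rightarrow> 'a::field) set \<Rightarrow> (nat \<Rightarrow> 'a) set set" where
  "points_in N W = {P \<in> PG_points N. P \<subseteq> W}"

definition mult_of :: "((nat \<Rightarrow> 'a::field) set \<Rightarrow> nat) \<Rightarrow> (nat \<Rightarrow> 'a) set set \<Rightarrow> nat" where
  "mult_of K S = (\<Sum>P\<in>S. K P)"

(* multisets of points of PG(N,F) (maps from the points to N, zero off the point set)
   such that every projective r-subspace has multiplicity at most w *)
definition admissible :: "'a itself \<Rightarrow> nat \<Rightarrow> nat \<Rightarrow> nat \<Rightarrow> ((nat \<Rightarrow> 'a::field) set \<Rightarrow> nat) \<Rightarrow> bool" where
  "admissible _ r N w K \<longleftrightarrow>
     (\<forall>P. P \<notin> PG_points N \<longrightarrow> K P = 0) \<and>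
     (\<forall>W \<in> PG_subspaces N r. mult_of K (points_in N W) \<le> w)"

(* m_q^(r)(N,w), the field of order q being the type 'a *)
definition m_q :: "'a::{field,finite} itself \<Rightarrow> nat \<Rightarrow> nat \<Rightarrow> nat \<Rightarrow> nat" where
  "m_q F r N w = Max {mult_of K (PG_points N) | K. admissible F r N w K}"

end

(*
  With r = 2 and w = 3 = r + 1: if the total multiplicity is at least 4, no point has
  multiplicity 2 (together with two further points of the support it would lie in a plane
  of multiplicity 4), and no four points of the support lie in a common plane.  Hence the
  support is given by vectors any four of which are linearly independent.  Nine such vectors
  do not exist in GF(2)^6: their zero-sum subsets form a binary linear code of length 9 with
  at least 2^9 / 2^6 = 8 words and minimum weight 5, whereas the Plotkin bound allows at
  most 6.  Conversely, the six unit vectors together with e0+e1+e2+e3 and e2+e3+e4+e5 are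
  eight vectors any four of which are independent, over every field.
*)

theory Submission
  imports Defs "HOL-Library.FuncSet"
begin

section \<open>Vectors and points of PG(N, F)\<close>

interpretation V: vector_space "scal :: 'a::field \<Rightarrow> (nat \<Rightarrow> 'a) \<Rightarrow> _"
  by unfold_locales (auto simp: scal_def fun_eq_iff algebra_simps)

lemma scal_apply [simp]: "scal c v i = c * v i"
  by (simp add: scal_def)

lemma sum_fun_apply: "(sum f A) i = (\<Sum>x\<in>A. f x i)"
  for f :: "_ \<Rightarrow> _ \<Rightarrow> 'b::comm_monoid_add"
  by (induction A rule: infinite_finite_induct) auto

lemma subspace_vecs: "V.subspace (vecs N :: (nat \<Rightarrow> 'a::field) set)"
  by (auto simp: V.subspace_def vecs_def)

lemma sum_in_vecs: "(\<And>v. v \<in> A \<Longrightarrow> v \<in> vecs N) \<Longrightarrow> (\<Sum>v\<in>A. v) \<in> vecs N"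
  by (auto simp: vecs_def sum_fun_apply intro!: sum.neutral)

lemma inj_on_restrict_vecs: "inj_on (\<lambda>v. restrict v {0..N}) (vecs N)"
  by (auto simp: inj_on_def vecs_def fun_eq_iff restrict_def) (metis not_le)

lemma finite_vecs: "finite (vecs N :: (nat \<Rightarrow> 'a::{field,finite}) set)"
proof (rule finite_imageD[OF _ inj_on_restrict_vecs])
  show "finite ((\<lambda>v. restrict v {0..N}) ` (vecs N :: (nat \<Rightarrow> 'a) set))"
    by (rule finite_subset[of _ "\<Pi>\<^sub>E i\<in>{0..N}. UNIV"]) (auto intro: finite_PiE)
qed

lemma card_vecs_le:
  "card (vecs N :: (nat \<Rightarrow> 'a::{field,finite}) set) \<le> card (UNIV :: 'a set) ^ (N + 1)"
proof -
  have "card (vecs N :: (nat \<Rightarrow> 'a) set)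
      = card ((\<lambda>v. restrict v {0..N}) ` (vecs N :: (nat \<Rightarrow> 'a) set))"
    by (simp add: card_image inj_on_restrict_vecs)
  also have "\<dots> \<le> card (\<Pi>\<^sub>E i\<in>{0..N}. (UNIV :: 'a set))"
    by (rule card_mono) (auto intro: finite_PiE)
  finally show ?thesis by (simp add: card_PiE)
qed

lemma finite_PG_points: "finite (PG_points N :: (nat \<Rightarrow> 'a::{field,finite}) set set)"
  by (rule finite_subset[of _ "Pow (vecs N)"]) (auto simp: PG_points_def lin_subspace_def finite_vecs)

lemma card_le_dim_if_independent:
  fixes A W :: "(nat \<Rightarrow> 'a::field) set"
  assumes "V.independent A" "A \<subseteq> W" "finite W"
  shows "card A \<le> V.dim W"
proof -
  obtain B where B: "B \<subseteq> W" "V.independent B" "W \<subseteq> V.span B" "card B = V.dim W"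
    by (rule V.basis_exists)
  have "finite B"
    using B(1) assms(3) by (rule finite_subset)
  moreover have "A \<subseteq> V.span B"
    using assms(2) B(3) by (rule order_trans)
  ultimately have "card A \<le> card B"
    using V.independent_span_bound assms(1) by blast
  then show ?thesis using B(4) by simp
qed

lemma independent_if_card_le_dim:
  fixes B :: "(nat \<Rightarrow> 'a::field) set"
  assumes "finite B" "card B \<le> V.dim B"
  shows "V.independent B"
proof -
  obtain B' where B': "B' \<subseteq> B" "V.independent B'" "B \<subseteq> V.span B'" "card B' = V.dim B"
    by (rule V.basis_exists)
  have "B' = B"
  proof (rule ccontr)
    assume "B' \<noteq> B"
    then have "card B' < card B"
      using B'(1) by (intro psubset_card_mono[OF assms(1)]) auto
    then show False using B'(4) assms(2) by simp
  qed
  then show ?thesis using B'(2) by simp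
qed

lemma sum_nonzero_if_independent:
  fixes A :: "(nat \<Rightarrow> 'a::field) set"
  assumes "V.independent A" "finite A" "A \<noteq> {}"
  shows "(\<Sum>v\<in>A. v) \<noteq> 0"
proof
  assume "(\<Sum>v\<in>A. v) = 0"
  then have "(\<Sum>v\<in>A. scal 1 v) = 0" by (simp add: scal_def)
  then have "V.dependent A"
    unfolding V.dependent_explicit using assms(2,3)
    by (intro exI[of _ A] exI[of _ "\<lambda>_. 1"]) auto
  then show False using assms(1) by contradiction
qed

definition unit_vec :: "nat \<Rightarrow> nat \<Rightarrow> 'a::field" where
  "unit_vec k = (\<lambda>i. if i = k then 1 else 0)"

lemma inj_unit_vec: "inj (unit_vec :: nat \<Rightarrow> nat \<Rightarrow> 'a::field)"
proof (rule injI)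
  fix k l :: nat
  assume "(unit_vec k :: nat \<Rightarrow> 'a) = unit_vec l"
  then have "(unit_vec k :: nat \<Rightarrow> 'a) k = unit_vec l k" by simp
  then show "k = l" by (simp add: unit_vec_def split: if_splits)
qed

lemma independent_unit_vecs: "V.independent (unit_vec ` {0..<n} :: (nat \<Rightarrow> 'a::field) set)"
proof (rule V.independent_if_scalars_zero)
  fix f :: "(nat \<Rightarrow> 'a) \<Rightarrow> 'a" and x :: "nat \<Rightarrow> 'a"
  assume s: "(\<Sum>x\<in>unit_vec ` {0..<n}. scal (f x) x) = 0" and x: "x \<in> unit_vec ` {0..<n}"
  from x obtain k where k: "k < n" "x = unit_vec k" by auto
  have "0 = (\<Sum>x\<in>unit_vec ` {0..<n}. scal (f x) x) k" using s by simp
  also have "\<dots> = (\<Sum>j\<in>{0..<n}. f (unit_vec j) * unit_vec j k)"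
    unfolding sum_fun_apply scal_apply
    by (rule sum.reindex[OF inj_on_subset[OF inj_unit_vec], unfolded comp_def]) simp
  also have "\<dots> = (\<Sum>j\<in>{0..<n}. if k = j then f (unit_vec j) else 0)"
    by (rule sum.cong) (auto simp: unit_vec_def)
  also have "\<dots> = f x"
    using k by simp
  finally show "f x = 0" by (rule sym)
qed simp

lemma unit_vec_in_vecs: "k \<le> N \<Longrightarrow> unit_vec k \<in> vecs N"
  by (auto simp: unit_vec_def vecs_def)

lemma PG_point_eq_span:
  assumes "P \<in> PG_points N"
  obtains v where "v \<in> vecs N" "v \<noteq> 0" "P = V.span {v}"
proof -
  have P: "P \<subseteq> vecs N" "V.subspace P" "V.dim P = 1"
    using assms by (auto simp: PG_points_def lin_subspace_def)
  obtain B where B: "B \<subseteq> P" "V.independent B" "P \<subseteq> V.span B" "card B = V.dim P"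
    by (rule V.basis_exists)
  have "card B = 1" using B(4) P(3) by simp
  then obtain v where v: "B = {v}" by (rule card_1_singletonE)
  have "v \<in> vecs N" using B(1) P(1) v by auto
  moreover have "v \<noteq> 0" using B(2) v by simp
  moreover have "V.span B \<subseteq> P"
    using B(1) P(2) by (rule V.span_minimal)
  then have "P = V.span {v}" using B(3) v by auto
  ultimately show thesis by (rule that)
qed

definition point_rep :: "(nat \<Rightarrow> 'a::field) set \<Rightarrow> nat \<Rightarrow> 'a" where
  "point_rep P = (SOME v. v \<noteq> 0 \<and> P = V.span {v})"

lemma point_rep:
  assumes "P \<in> PG_points N"
  shows "point_rep P \<in> vecs N" "point_rep P \<noteq> 0" "P = V.span {point_rep P}"
proof -
  obtain v where v: "v \<in> vecs N" "v \<noteq> 0" "P = V.span {v}"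
    using assms by (rule PG_point_eq_span)
  have rep: "point_rep P \<noteq> 0 \<and> P = V.span {point_rep P}"
    unfolding point_rep_def by (rule someI[of "\<lambda>w. w \<noteq> 0 \<and> P = V.span {w}" v]) (use v in simp)
  then show "point_rep P \<noteq> 0" "P = V.span {point_rep P}" by simp_all
  have "point_rep P \<in> V.span {point_rep P}" by (rule V.span_base) simp
  moreover have "P \<subseteq> vecs N"
    using assms by (simp add: PG_points_def lin_subspace_def)
  ultimately show "point_rep P \<in> vecs N" using rep by blast
qed

lemma inj_on_point_rep: "inj_on point_rep (PG_points N :: (nat \<Rightarrow> 'a::field) set set)"
proof (rule inj_onI)
  fix P Q :: "(nat \<Rightarrow> 'a) set"
  assume "P \<in> PG_points N" "Q \<in> PG_points N" "point_rep P = point_rep Q"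
  then show "P = Q" using point_rep(3) by metis
qed

lemma span_singleton_in_PG_points:
  assumes "v \<in> vecs N" "v \<noteq> 0"
  shows "V.span {v} \<in> PG_points N"
proof -
  have "V.span {v} \<subseteq> vecs N"
    using assms(1) subspace_vecs by (intro V.span_minimal) auto
  moreover have "V.dim (V.span {v}) = 1"
    using assms(2) by (subst V.dim_span_eq_card_independent) auto
  ultimately show ?thesis by (auto simp: PG_points_def lin_subspace_def)
qed

lemma exists_PG_subspace_superset:
  fixes B :: "(nat \<Rightarrow> 'a::{field,finite}) set"
  assumes "B \<subseteq> vecs N" "V.dim B \<le> r + 1" "r \<le> N"
  obtains W where "W \<in> PG_subspaces N r" "B \<subseteq> W"
proof -
  obtain b where b: "b \<subseteq> B" "V.independent b" "B \<subseteq> V.span b" "card b = V.dim B"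
    by (rule V.basis_exists)
  obtain C where C: "b \<subseteq> C" "C \<subseteq> vecs N" "V.independent C" "vecs N \<subseteq> V.span C"
    using V.maximal_independent_subset_extend[of b "vecs N"] b(1,2) assms(1) by blast
  have "finite C"
    using C(2) finite_vecs by (rule finite_subset)
  moreover have "(unit_vec ` {0..<r + 1} :: (nat \<Rightarrow> 'a) set) \<subseteq> V.span C"
  proof
    fix x :: "nat \<Rightarrow> 'a"
    assume "x \<in> unit_vec ` {0..<r + 1}"
    then have "x \<in> vecs N" using assms(3) by (auto intro!: unit_vec_in_vecs)
    then show "x \<in> V.span C" using C(4) by blast
  qed
  ultimately have "card (unit_vec ` {0..<r + 1} :: (nat \<Rightarrow> 'a) set) \<le> card C"
    using V.independent_span_bound[OF _ independent_unit_vecs] by simp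
  then have "r + 1 \<le> card C"
    by (simp add: card_image inj_on_subset[OF inj_unit_vec])
  then obtain D where D: "b \<subseteq> D" "D \<subseteq> C" "card D = r + 1"
    using exists_subset_between[of b "r + 1" C] b(4) assms(2) C(1) \<open>finite C\<close> by auto
  have "V.independent D"
    using C(3) D(2) V.independent_mono by blast
  then have "V.dim (V.span D) = r + 1"
    using D(3) by (simp add: V.dim_eq_card_independent)
  moreover have "V.span D \<subseteq> vecs N"
    using D(2) C(2) subspace_vecs by (intro V.span_minimal) auto
  ultimately have "V.span D \<in> PG_subspaces N r"
    by (auto simp: PG_subspaces_def lin_subspace_def)
  moreover have "B \<subseteq> V.span D"
    using b(3) V.span_mono[OF D(1)] by blast
  ultimately show thesis by (rule that)
qed

section \<open>Multisets bounded by r + 1 on r-spaces and sets in general position\<close>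

lemma admissible_sum_le:
  fixes K :: "(nat \<Rightarrow> 'a::{field,finite}) set \<Rightarrow> nat"
  assumes adm: "admissible TYPE('a) r N w K" and "r \<le> N" and T: "T \<subseteq> PG_points N"
    and dim: "V.dim (point_rep ` T) \<le> r + 1"
  shows "(\<Sum>P\<in>T. K P) \<le> w"
proof -
  have "point_rep ` T \<subseteq> vecs N" using T point_rep(1) by blast
  then obtain W where W: "W \<in> PG_subspaces N r" "point_rep ` T \<subseteq> W"
    using dim \<open>r \<le> N\<close> by (rule exists_PG_subspace_superset)
  have "V.subspace W" using W(1) by (simp add: PG_subspaces_def lin_subspace_def)
  have T_in_W: "T \<subseteq> points_in N W"
  proof
    fix P assume "P \<in> T"
    then have "V.span {point_rep P} \<subseteq> W"
      using W(2) \<open>V.subspace W\<close> by (intro V.span_minimal) auto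
    then show "P \<in> points_in N W"
      using point_rep(3)[of P N] \<open>P \<in> T\<close> T by (auto simp: points_in_def)
  qed
  have "finite (points_in N W)"
    by (rule finite_subset[OF _ finite_PG_points]) (auto simp: points_in_def)
  then have "(\<Sum>P\<in>T. K P) \<le> mult_of K (points_in N W)"
    unfolding mult_of_def using T_in_W by (rule sum_mono2) simp
  also have "\<dots> \<le> w" using adm W(1) by (simp add: admissible_def)
  finally show ?thesis .
qed

lemma admissible_sum_le_if_card_le:
  fixes K :: "(nat \<Rightarrow> 'a::{field,finite}) set \<Rightarrow> nat"
  assumes adm: "admissible TYPE('a) r N w K" and "r \<le> N" and T: "T \<subseteq> PG_points N"
    and card: "card T \<le> r + 1"
  shows "(\<Sum>P\<in>T. K P) \<le> w"
proof (rule admissible_sum_le[OF adm \<open>r \<le> N\<close> T])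
  have "finite T" using T finite_PG_points by (rule finite_subset)
  then have "V.dim (point_rep ` T) \<le> card (point_rep ` T)" by (intro V.dim_le_card') simp
  also have "\<dots> \<le> card T" using \<open>finite T\<close> by (rule card_image_le)
  finally show "V.dim (point_rep ` T) \<le> r + 1" using card by simp
qed

lemma independent_point_reps_if_heavy:
  fixes K :: "(nat \<Rightarrow> 'a::{field,finite}) set \<Rightarrow> nat"
  assumes adm: "admissible TYPE('a) r N w K" and "r \<le> N" and T: "T \<subseteq> PG_points N"
    and card: "card T \<le> r + 2" and heavy: "w < (\<Sum>P\<in>T. K P)"
  shows "V.independent (point_rep ` T)"
proof (rule independent_if_card_le_dim)
  have "finite T" using T finite_PG_points by (rule finite_subset)
  then show "finite (point_rep ` T)" by simp
  have "card (point_rep ` T) \<le> r + 2"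
    using card_image_le[OF \<open>finite T\<close>, of point_rep] card by simp
  also have "r + 2 \<le> V.dim (point_rep ` T)"
    using admissible_sum_le[OF adm \<open>r \<le> N\<close> T] heavy by fastforce
  finally show "card (point_rep ` T) \<le> V.dim (point_rep ` T)" .
qed

lemma admissible_support_subset:
  "admissible F r N w K \<Longrightarrow> {P. K P \<noteq> 0} \<subseteq> PG_points N"
  by (auto simp: admissible_def)

lemma mult_of_PG_points_eq_sum_support:
  fixes K :: "(nat \<Rightarrow> 'a::{field,finite}) set \<Rightarrow> nat"
  assumes "admissible TYPE('a) r N w K"
  shows "mult_of K (PG_points N) = (\<Sum>P | K P \<noteq> 0. K P)"
  unfolding mult_of_def
  using admissible_support_subset[OF assms] finite_PG_points
  by (intro sum.mono_neutral_right) auto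

lemma admissible_mult_le_one:
  fixes K :: "(nat \<Rightarrow> 'a::{field,finite}) set \<Rightarrow> nat"
  assumes adm: "admissible TYPE('a) r N (r + 1) K" and "r \<le> N"
    and big: "r + 2 \<le> mult_of K (PG_points N)"
  shows "K P \<le> 1"
proof (rule ccontr)
  assume "\<not> K P \<le> 1"
  define S where "S = {P. K P \<noteq> 0}"
  have S: "S \<subseteq> PG_points N" "finite S"
    using admissible_support_subset[OF adm] finite_PG_points by (auto simp: S_def intro: finite_subset)
  have total: "mult_of K (PG_points N) = (\<Sum>Q\<in>S. K Q)"
    unfolding S_def by (rule mult_of_PG_points_eq_sum_support[OF adm])
  have "r + 1 < card S"
  proof (rule ccontr)
    assume "\<not> r + 1 < card S"
    then show False
      using admissible_sum_le_if_card_le[OF adm \<open>r \<le> N\<close> S(1)] big total by simp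
  qed
  moreover have "P \<in> S" using \<open>\<not> K P \<le> 1\<close> by (simp add: S_def)
  ultimately obtain T where T: "{P} \<subseteq> T" "T \<subseteq> S" "card T = r + 1"
    using exists_subset_between[of "{P}" "r + 1" S] S(2) by auto
  have "finite T" using T(2) S(2) by (rule finite_subset)
  have "(\<Sum>Q\<in>T - {P}. 1) \<le> (\<Sum>Q\<in>T - {P}. K Q)"
    using T(2) by (intro sum_mono) (auto simp: S_def Suc_le_eq)
  moreover have "(\<Sum>Q\<in>T. K Q) = K P + (\<Sum>Q\<in>T - {P}. K Q)"
    using T(1) \<open>finite T\<close> by (simp add: sum.remove)
  moreover have "card (T - {P}) = r" using T(1,3) \<open>finite T\<close> by simp
  moreover have "(\<Sum>Q\<in>T - {P}. 1) = card (T - {P})" by simp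
  ultimately have "r + 1 < (\<Sum>Q\<in>T. K Q)" using \<open>\<not> K P \<le> 1\<close> by simp
  moreover have "(\<Sum>Q\<in>T. K Q) \<le> r + 1"
    using T(2,3) S(1) by (intro admissible_sum_le_if_card_le[OF adm \<open>r \<le> N\<close>]) auto
  ultimately show False by simp
qed

lemma admissible_imp_general_position:
  fixes K :: "(nat \<Rightarrow> 'a::{field,finite}) set \<Rightarrow> nat"
  assumes adm: "admissible TYPE('a) r N (r + 1) K" and "r \<le> N"
    and big: "r + 2 \<le> mult_of K (PG_points N)"
  obtains X :: "(nat \<Rightarrow> 'a) set"
  where "X \<subseteq> vecs N" "card X = mult_of K (PG_points N)"
    "\<And>B. B \<subseteq> X \<Longrightarrow> card B \<le> r + 2 \<Longrightarrow> V.independent B"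
proof -
  define S where "S = {P. K P \<noteq> 0}"
  have S: "S \<subseteq> PG_points N" "finite S"
    using admissible_support_subset[OF adm] finite_PG_points by (auto simp: S_def intro: finite_subset)
  have K1: "K P = 1" if "P \<in> S" for P
    using admissible_mult_le_one[OF adm \<open>r \<le> N\<close> big, of P] that by (simp add: S_def)
  have "mult_of K (PG_points N) = (\<Sum>P\<in>S. K P)"
    unfolding S_def by (rule mult_of_PG_points_eq_sum_support[OF adm])
  also have "\<dots> = card S" using K1 by simp
  finally have total: "mult_of K (PG_points N) = card S" .
  have inj: "inj_on point_rep S"
    using inj_on_point_rep S(1) by (rule inj_on_subset)
  have X_vecs: "point_rep ` S \<subseteq> vecs N" using S(1) point_rep(1) by blast
  have card_X: "card (point_rep ` S) = mult_of K (PG_points N)"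
    using card_image[OF inj] total by simp
  have indep: "V.independent B" if B: "B \<subseteq> point_rep ` S" "card B \<le> r + 2" for B
  proof -
    obtain B' where B': "B \<subseteq> B'" "B' \<subseteq> point_rep ` S" "card B' = r + 2"
      using exists_subset_between[of B "r + 2" "point_rep ` S"] B card_X big S(2) by auto
    define T where "T = {P \<in> S. point_rep P \<in> B'}"
    have "T \<subseteq> S" by (simp add: T_def)
    have B'_eq: "point_rep ` T = B'" using B'(2) by (auto simp: T_def)
    have "card T = r + 2"
      using card_image[OF inj_on_subset[OF inj \<open>T \<subseteq> S\<close>]] B'_eq B'(3) by simp
    moreover have "(\<Sum>P\<in>T. K P) = card T"
      using K1 \<open>T \<subseteq> S\<close> by (simp add: subset_iff)
    moreover have "T \<subseteq> PG_points N" using \<open>T \<subseteq> S\<close> S(1) by blast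
    ultimately have "V.independent (point_rep ` T)"
      by (intro independent_point_reps_if_heavy[OF adm \<open>r \<le> N\<close>]) simp_all
    then show ?thesis using B'(1) B'_eq V.independent_mono by blast
  qed
  show thesis by (rule that[OF X_vecs card_X indep])
qed

lemma card_in_PG_subspace_le_if_general_position:
  fixes X :: "(nat \<Rightarrow> 'a::{field,finite}) set"
  assumes indep: "\<And>B. B \<subseteq> X \<Longrightarrow> card B \<le> r + 2 \<Longrightarrow> V.independent B"
    and W: "W \<in> PG_subspaces N r" and "finite X"
  shows "card {v \<in> X. V.span {v} \<subseteq> W} \<le> r + 1"
proof (rule ccontr)
  assume "\<not> card {v \<in> X. V.span {v} \<subseteq> W} \<le> r + 1"
  then have "r + 2 \<le> card {v \<in> X. V.span {v} \<subseteq> W}" by simp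
  then obtain B where B: "B \<subseteq> {v \<in> X. V.span {v} \<subseteq> W}" "card B = r + 2" "finite B"
    by (rule obtain_subset_with_card_n)
  have "B \<subseteq> W"
  proof
    fix v assume "v \<in> B"
    then have "V.span {v} \<subseteq> W" using B(1) by blast
    then show "v \<in> W" using V.span_base[of v "{v}"] by blast
  qed
  moreover have "finite W"
    using W finite_vecs by (auto simp: PG_subspaces_def lin_subspace_def intro: finite_subset)
  moreover have "V.independent B" using B by (intro indep) auto
  ultimately have "card B \<le> V.dim W" by (intro card_le_dim_if_independent)
  then show False using W B(2) by (simp add: PG_subspaces_def lin_subspace_def)
qed

lemma general_position_imp_admissible:
  fixes X :: "(nat \<Rightarrow> 'a::{field,finite}) set"
  assumes X: "X \<subseteq> vecs N" and indep: "\<And>B. B \<subseteq> X \<Longrightarrow> card B \<le> r + 2 \<Longrightarrow> V.independent B"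
  obtains K where "admissible TYPE('a) r N (r + 1) K" "mult_of K (PG_points N) = card X"
proof -
  define pt where "pt v = V.span {v}" for v :: "nat \<Rightarrow> 'a"
  define K where "K P = (if P \<in> pt ` X then 1 else 0 :: nat)" for P
  have "finite X" using X finite_vecs by (rule finite_subset)
  have "v \<noteq> 0" if "v \<in> X" for v
    using indep[of "{v}"] that by auto
  then have pts: "pt ` X \<subseteq> PG_points N"
    using X span_singleton_in_PG_points by (auto simp: pt_def)
  have inj: "inj_on pt X"
  proof (rule inj_onI, rule ccontr)
    fix x y assume xy: "x \<in> X" "y \<in> X" "pt x = pt y" "x \<noteq> y"
    have "V.independent {x, y}" using xy by (intro indep) auto
    moreover have "x \<in> V.span ({x, y} - {x})"
      using xy V.span_base[of x "{x}"] by (simp add: pt_def insert_Diff_if)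
    ultimately show False unfolding V.dependent_def by blast
  qed
  have mult: "mult_of K A = card (A \<inter> pt ` X)" if "finite A" for A
    using sum.inter_filter[OF that, of "\<lambda>_. 1::nat" "\<lambda>P. P \<in> pt ` X"]
    by (simp add: mult_of_def K_def Int_def)
  have "mult_of K (points_in N W) \<le> r + 1" if W: "W \<in> PG_subspaces N r" for W
  proof -
    have "finite (points_in N W)"
      by (rule finite_subset[OF _ finite_PG_points]) (auto simp: points_in_def)
    then have "mult_of K (points_in N W) = card (points_in N W \<inter> pt ` X)"
      by (rule mult)
    also have "\<dots> \<le> card (pt ` {v \<in> X. V.span {v} \<subseteq> W})"
      using \<open>finite X\<close> by (intro card_mono) (auto simp: points_in_def pt_def)
    also have "\<dots> \<le> card {v \<in> X. V.span {v} \<subseteq> W}"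
      using \<open>finite X\<close> by (intro card_image_le) simp
    also have "\<dots> \<le> r + 1"
      using indep W \<open>finite X\<close> by (rule card_in_PG_subspace_le_if_general_position)
    finally show ?thesis .
  qed
  then have "admissible TYPE('a) r N (r + 1) K"
    using pts by (auto simp: admissible_def K_def)
  moreover have "mult_of K (PG_points N) = card X"
    using mult[OF finite_PG_points] pts card_image[OF inj] by (simp add: Int_absorb1)
  ultimately show thesis by (rule that)
qed

section \<open>Zero-sum subsets and the Plotkin bound\<close>

lemma inj_on_sym_diff: "inj_on (\<lambda>A. sym_diff A X) S"
  by (auto simp: inj_on_def)

lemma card_sym_diff:
  assumes "finite A" "finite B"
  shows "card (sym_diff A B) + 2 * card (A \<inter> B) = card A + card B"
proof -
  have "card (sym_diff A B) = card (A - B) + card (B - A)"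
    using assms by (intro card_Un_disjoint) auto
  moreover have "card A = card (A \<inter> B) + card (A - B)"
    using assms(1) by (rule card_Int_Diff)
  moreover have "card B = card (A \<inter> B) + card (B - A)"
    using card_Int_Diff[OF assms(2), of A] by (simp add: Int_commute)
  ultimately show ?thesis by simp
qed

lemma sum_sym_diff:
  fixes A B :: "'b::ab_group_add set"
  assumes char2: "\<And>x::'b. x + x = 0" and "finite A" "finite B"
  shows "(\<Sum>v\<in>sym_diff A B. v) = (\<Sum>v\<in>A. v) + (\<Sum>v\<in>B. v)"
proof -
  have "(\<Sum>v\<in>A. v) + (\<Sum>v\<in>B. v)
      = ((\<Sum>v\<in>A \<inter> B. v) + (\<Sum>v\<in>A \<inter> B. v)) + ((\<Sum>v\<in>A - B. v) + (\<Sum>v\<in>B - A. v))"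
    using sum.Int_Diff[OF assms(2), of id B] sum.Int_Diff[OF assms(3), of id A]
    by (simp add: Int_commute algebra_simps)
  also have "\<dots> = (\<Sum>v\<in>sym_diff A B. v)"
    using assms(2,3) by (simp add: char2 sum.union_disjoint Diff_Int_distrib2)
  finally show ?thesis ..
qed

lemma card_Pow_le_card_zero_sum_subsets:
  fixes V Y :: "'b::ab_group_add set"
  assumes char2: "\<And>x::'b. x + x = 0" and "finite V" "finite Y"
    and Y: "\<And>A. A \<subseteq> V \<Longrightarrow> (\<Sum>v\<in>A. v) \<in> Y"
  shows "2 ^ card V \<le> card Y * card {A. A \<subseteq> V \<and> (\<Sum>v\<in>A. v) = 0}"
proof -
  define G where "G = {A. A \<subseteq> V \<and> (\<Sum>v\<in>A. v) = 0}"
  define fibre where "fibre y = {A. A \<subseteq> V \<and> (\<Sum>v\<in>A. v) = y}" for y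
  have "finite G" using \<open>finite V\<close> by (simp add: G_def)
  have fibre_le: "card (fibre y) \<le> card G" for y
  proof (cases "fibre y = {}")
    case False
    then obtain A0 where A0: "A0 \<subseteq> V" "(\<Sum>v\<in>A0. v) = y" by (auto simp: fibre_def)
    have "(\<lambda>A. sym_diff A A0) ` fibre y \<subseteq> G"
    proof
      fix B assume "B \<in> (\<lambda>A. sym_diff A A0) ` fibre y"
      then obtain A where A: "A \<subseteq> V" "(\<Sum>v\<in>A. v) = y" "B = sym_diff A A0"
        by (auto simp: fibre_def)
      have "(\<Sum>v\<in>B. v) = y + y"
        using sum_sym_diff[OF char2, of A A0] A A0 \<open>finite V\<close>
        by (auto dest: finite_subset)
      then show "B \<in> G" using A A0 char2 by (auto simp: G_def)
    qed
    then show ?thesis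
      using card_inj_on_le[OF inj_on_sym_diff _ \<open>finite G\<close>] by blast
  qed simp
  have "Pow V = (\<Union>y\<in>Y. fibre y)" using Y by (auto simp: fibre_def)
  then have "card (Pow V) \<le> (\<Sum>y\<in>Y. card (fibre y))"
    using card_UN_le[OF \<open>finite Y\<close>, of fibre] by simp
  also have "\<dots> \<le> card Y * card G"
    using sum_mono[of Y "\<lambda>y. card (fibre y)" "\<lambda>_. card G"] fibre_le by simp
  finally show ?thesis using \<open>finite V\<close> by (simp add: card_Pow G_def)
qed

lemma card_members_containing_le_half:
  assumes "finite G" and closed: "\<And>A B. A \<in> G \<Longrightarrow> B \<in> G \<Longrightarrow> sym_diff A B \<in> G"
  shows "2 * card {A \<in> G. x \<in> A} \<le> card G"
proof (cases "\<exists>X\<in>G. x \<in> X")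
  case True
  then obtain X where X: "X \<in> G" "x \<in> X" by blast
  have "(\<lambda>A. sym_diff A X) ` {A \<in> G. x \<in> A} \<subseteq> {A \<in> G. x \<notin> A}"
    using X closed by blast
  then have "card {A \<in> G. x \<in> A} \<le> card {A \<in> G. x \<notin> A}"
    by (rule card_inj_on_le[OF inj_on_sym_diff]) (simp add: \<open>finite G\<close>)
  moreover have "G = {A \<in> G. x \<in> A} \<union> {A \<in> G. x \<notin> A}" by blast
  then have "card G = card {A \<in> G. x \<in> A} + card {A \<in> G. x \<notin> A}"
    using \<open>finite G\<close> by (metis (no_types, lifting) card_Un_disjoint disjoint_iff finite_Un mem_Collect_eq)
  ultimately show ?thesis by simp
next
  case False
  then have none: "{A \<in> G. x \<in> A} = {}" by blast
  show ?thesis unfolding none by simp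
qed

lemma sum_card_le_half:
  assumes "finite U" "G \<subseteq> Pow U"
    and closed: "\<And>A B. A \<in> G \<Longrightarrow> B \<in> G \<Longrightarrow> sym_diff A B \<in> G"
  shows "2 * (\<Sum>A\<in>G. card A) \<le> card U * card G"
proof -
  have "finite G" using assms(1,2) by (simp add: finite_subset)
  have "(\<Sum>A\<in>G. card A) = (\<Sum>A\<in>G. \<Sum>x\<in>U. if x \<in> A then 1 else 0)"
    using assms(1,2) by (intro sum.cong) (auto simp: sum.If_cases Int_absorb1)
  also have "\<dots> = (\<Sum>x\<in>U. card {A \<in> G. x \<in> A})"
    using \<open>finite G\<close> by (subst sum.swap) (simp add: sum.If_cases Int_def)
  finally have "2 * (\<Sum>A\<in>G. card A) = (\<Sum>x\<in>U. 2 * card {A \<in> G. x \<in> A})"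
    by (simp add: sum_distrib_left)
  also have "\<dots> \<le> (\<Sum>x\<in>U. card G)"
    using card_members_containing_le_half[OF \<open>finite G\<close> closed] by (intro sum_mono) blast
  finally show ?thesis by simp
qed

lemma card_even_members_eq_card_odd_members:
  assumes "finite U" "G \<subseteq> Pow U"
    and closed: "\<And>A B. A \<in> G \<Longrightarrow> B \<in> G \<Longrightarrow> sym_diff A B \<in> G"
    and X: "X \<in> G" "odd (card X)"
  shows "card {A \<in> G. even (card A)} = card {A \<in> G. odd (card A)}"
proof -
  have "finite G" using assms(1,2) by (simp add: finite_subset)
  have parity: "even (card (sym_diff A X)) \<longleftrightarrow> odd (card A)" if "A \<in> G" for A
  proof -
    have "finite A" "finite X" using that X(1) assms(1,2) by (auto intro: finite_subset)
    then have "card (sym_diff A X) + 2 * card (A \<inter> X) = card A + card X"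
      by (rule card_sym_diff)
    then show ?thesis using X(2) by presburger
  qed
  have "(\<lambda>A. sym_diff A X) ` {A \<in> G. even (card A)} \<subseteq> {A \<in> G. odd (card A)}"
    using parity closed X(1) by auto
  then have "card {A \<in> G. even (card A)} \<le> card {A \<in> G. odd (card A)}"
    by (rule card_inj_on_le[OF inj_on_sym_diff]) (simp add: \<open>finite G\<close>)
  moreover have "(\<lambda>A. sym_diff A X) ` {A \<in> G. odd (card A)} \<subseteq> {A \<in> G. even (card A)}"
    using parity closed X(1) by auto
  then have "card {A \<in> G. odd (card A)} \<le> card {A \<in> G. even (card A)}"
    by (rule card_inj_on_le[OF inj_on_sym_diff]) (simp add: \<open>finite G\<close>)
  ultimately show ?thesis by (rule le_antisym)
qed

lemma sum_card_even_members_ge: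
  assumes "finite G" "{} \<in> G" "odd d" and weight: "\<And>A. A \<in> G \<Longrightarrow> A \<noteq> {} \<Longrightarrow> d \<le> card A"
  shows "(d + 1) * card {A \<in> G. even (card A)} \<le> (\<Sum>A\<in>{A \<in> G. even (card A)}. card A) + (d + 1)"
proof -
  define E where "E = {A \<in> G. even (card A)}"
  have "finite E" "{} \<in> E" using assms(1,2) by (simp_all add: E_def)
  have "(\<Sum>A\<in>E - {{}}. d + 1) \<le> (\<Sum>A\<in>E - {{}}. card A)"
  proof (rule sum_mono)
    fix A assume "A \<in> E - {{}}"
    then have "d \<le> card A" "even (card A)" using weight by (auto simp: E_def)
    moreover have "d \<noteq> card A" using \<open>even (card A)\<close> \<open>odd d\<close> by auto
    ultimately show "d + 1 \<le> card A" by simp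
  qed
  moreover have "(\<Sum>A\<in>E - {{}}. card A) = (\<Sum>A\<in>E. card A)"
    using \<open>finite E\<close> \<open>{} \<in> E\<close> by (simp add: sum.remove)
  ultimately have "(d + 1) * card (E - {{}}) \<le> (\<Sum>A\<in>E. card A)" by (simp add: mult.commute)
  moreover have "card E = card (E - {{}}) + 1"
    using card.remove[OF \<open>finite E\<close> \<open>{} \<in> E\<close>] by simp
  then have "(d + 1) * card E = (d + 1) * card (E - {{}}) + (d + 1)"
    by (simp add: distrib_left)
  ultimately show ?thesis unfolding E_def by linarith
qed

lemma plotkin_bound_odd:
  assumes "finite U" "G \<subseteq> Pow U" "{} \<in> G"
    and closed: "\<And>A B. A \<in> G \<Longrightarrow> B \<in> G \<Longrightarrow> sym_diff A B \<in> G"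
    and "odd d" and weight: "\<And>A. A \<in> G \<Longrightarrow> A \<noteq> {} \<Longrightarrow> d \<le> card A"
  shows "(2 * d + 1) * card G \<le> card U * card G + 2 * (d + 1)"
proof -
  define E where "E = {A \<in> G. even (card A)}"
  define Od where "Od = {A \<in> G. odd (card A)}"
  have "finite G" using assms(1,2) by (simp add: finite_subset)
  have "G = E \<union> Od" "E \<inter> Od = {}" "finite E" "finite Od"
    using \<open>finite G\<close> by (auto simp: E_def Od_def)
  then have card_G: "card G = card E + card Od"
    and sum_G: "(\<Sum>A\<in>G. card A) = (\<Sum>A\<in>E. card A) + (\<Sum>A\<in>Od. card A)"
    by (simp_all add: card_Un_disjoint sum.union_disjoint)
  have weight_E: "(d + 1) * card E \<le> (\<Sum>A\<in>E. card A) + (d + 1)"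
    unfolding E_def using \<open>finite G\<close> assms(3) \<open>odd d\<close> weight by (rule sum_card_even_members_ge)
  have "(\<Sum>A\<in>Od. d) \<le> (\<Sum>A\<in>Od. card A)"
  proof (rule sum_mono)
    fix A assume "A \<in> Od"
    then have "A \<in> G" "A \<noteq> {}" by (auto simp: Od_def)
    then show "d \<le> card A" by (rule weight)
  qed
  then have weight_Od: "d * card Od \<le> (\<Sum>A\<in>Od. card A)" by (simp add: mult.commute)
  have "(2 * d + 1) * card G \<le> 2 * (\<Sum>A\<in>G. card A) + 2 * (d + 1)"
  proof (cases "Od = {}")
    case True
    then have "(2 * d + 1) * card G \<le> 2 * ((d + 1) * card E)"
      using card_G by (simp add: algebra_simps)
    then show ?thesis using True sum_G weight_E by simp
  next
    case False
    then obtain X where X: "X \<in> G" "odd (card X)" by (auto simp: Od_def)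
    have "card E = card Od"
      unfolding E_def Od_def using assms(1,2) closed X by (rule card_even_members_eq_card_odd_members)
    then have "(2 * d + 1) * card G = 2 * ((d + 1) * card E) + 2 * (d * card Od)"
      using card_G by (simp add: algebra_simps)
    also have "\<dots> \<le> 2 * ((\<Sum>A\<in>E. card A) + (d + 1)) + 2 * (\<Sum>A\<in>Od. card A)"
      using weight_E weight_Od by (intro add_mono) simp_all
    also have "\<dots> = 2 * (\<Sum>A\<in>G. card A) + 2 * (d + 1)"
      using sum_G by simp
    finally show ?thesis .
  qed
  then show ?thesis using sum_card_le_half[OF assms(1,2) closed] by linarith
qed

section \<open>Nine vectors of GF(2)^6 in general position do not exist\<close>

lemma one_plus_one_eq_zero_if_card_2:
  assumes "card (UNIV :: 'a::{field,finite} set) = 2"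
  shows "(1::'a) + 1 = 0"
proof (rule ccontr)
  define z where "z = (1::'a) + 1"
  assume "(1::'a) + 1 \<noteq> 0"
  moreover have "z \<noteq> 1" unfolding z_def by (metis add_cancel_right_right one_neq_zero)
  ultimately have "card {0, 1, z} = 3" by (simp add: z_def)
  moreover have "card {0, 1, z} \<le> card (UNIV :: 'a set)" by (rule card_mono) simp_all
  ultimately show False using assms by simp
qed

lemma add_self_eq_zero_if_card_2:
  assumes "card (UNIV :: 'a::{field,finite} set) = 2"
  shows "(v :: nat \<Rightarrow> 'a) + v = 0"
proof
  fix i
  have "(v + v) i = (1 + 1) * v i" by (simp add: algebra_simps)
  then show "(v + v) i = 0 i" using one_plus_one_eq_zero_if_card_2[OF assms] by simp
qed

lemma card_le_8_if_4_independent_gf2: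
  fixes X :: "(nat \<Rightarrow> 'a::{field,finite}) set"
  assumes two: "card (UNIV :: 'a set) = 2" and X: "X \<subseteq> vecs 5"
    and indep: "\<And>B. B \<subseteq> X \<Longrightarrow> card B \<le> 4 \<Longrightarrow> V.independent B"
  shows "card X \<le> 8"
proof (rule ccontr)
  assume "\<not> card X \<le> 8"
  then obtain X9 where X9: "X9 \<subseteq> X" "card X9 = 9"
    using obtain_subset_with_card_n[of 9 X] by auto
  then have "finite X9" by (simp add: card_ge_0_finite)
  define G where "G = {A. A \<subseteq> X9 \<and> (\<Sum>v\<in>A. v) = 0}"
  have "2 ^ card X9 \<le> card (vecs 5 :: (nat \<Rightarrow> 'a) set) * card G"
    unfolding G_def using add_self_eq_zero_if_card_2[OF two] \<open>finite X9\<close> finite_vecs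
  proof (rule card_Pow_le_card_zero_sum_subsets)
    show "(\<Sum>v\<in>A. v) \<in> vecs 5" if "A \<subseteq> X9" for A
      using that X9(1) X by (intro sum_in_vecs) auto
  qed
  also have "\<dots> \<le> 2 ^ 6 * card G"
    using card_vecs_le[of 5, where 'a='a] two by (intro mult_right_mono) simp_all
  finally have "8 \<le> card G" using X9(2) by simp
  have closed: "sym_diff A B \<in> G" if "A \<in> G" "B \<in> G" for A B
    using that sum_sym_diff[OF add_self_eq_zero_if_card_2[OF two], of A B] \<open>finite X9\<close>
    by (auto simp: G_def dest: finite_subset)
  have min_weight: "5 \<le> card A" if "A \<in> G" "A \<noteq> {}" for A
  proof (rule ccontr)
    assume "\<not> 5 \<le> card A"
    then have "V.independent A" using that(1) X9(1) by (intro indep) (auto simp: G_def)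
    moreover have "finite A" using that(1) \<open>finite X9\<close> by (auto simp: G_def dest: finite_subset)
    ultimately show False using sum_nonzero_if_independent that by (auto simp: G_def)
  qed
  have "(2 * 5 + 1) * card G \<le> card X9 * card G + 2 * (5 + 1)"
    using \<open>finite X9\<close> _ _ closed _ min_weight by (rule plotkin_bound_odd) (auto simp: G_def)
  then show False using \<open>8 \<le> card G\<close> X9(2) by simp
qed

section \<open>Eight vectors in general position\<close>

definition vec :: "'a::field list \<Rightarrow> nat \<Rightarrow> 'a" where
  "vec xs = (\<lambda>i. if i < length xs then xs ! i else 0)"

lemma vec_inject [simp]:
  assumes "length xs = length ys"
  shows "vec xs = vec ys \<longleftrightarrow> xs = ys"
proof
  assume "vec xs = vec ys"
  then have "xs ! i = ys ! i" if "i < length xs" for i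
    using that assms by (metis vec_def)
  then show "xs = ys" using assms by (simp add: nth_equalityI)
qed simp

lemma vec_apply: "vec xs i = (if i < length xs then xs ! i else 0)"
  by (simp add: vec_def)

lemma vec_in_vecs: "length xs = N + 1 \<Longrightarrow> vec xs \<in> vecs N"
  by (auto simp: vec_def vecs_def)

definition eight_vecs :: "(nat \<Rightarrow> 'a::field) set" where
  "eight_vecs = {vec [1,1,1,1,0,0], vec [0,0,1,1,1,1], vec [1,0,0,0,0,0], vec [0,1,0,0,0,0],
                 vec [0,0,1,0,0,0], vec [0,0,0,1,0,0], vec [0,0,0,0,1,0], vec [0,0,0,0,0,1]}"

lemma card_eight_vecs: "card (eight_vecs :: (nat \<Rightarrow> 'a::field) set) = 8"
  by (simp add: eight_vecs_def)

lemma eight_vecs_subset_vecs: "eight_vecs \<subseteq> vecs 5"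
  by (auto simp: eight_vecs_def intro!: vec_in_vecs)

lemma eight_vecs_relation_coeffs:
  fixes c :: "(nat \<Rightarrow> 'a::field) \<Rightarrow> 'a"
  assumes "(\<Sum>v\<in>eight_vecs. scal (c v) v) = 0"
  defines "a \<equiv> c (vec [1,1,1,1,0,0])" and "b \<equiv> c (vec [0,0,1,1,1,1])"
  shows "c (vec [1,0,0,0,0,0]) = - a" "c (vec [0,1,0,0,0,0]) = - a"
    "c (vec [0,0,1,0,0,0]) = - (a + b)" "c (vec [0,0,0,1,0,0]) = - (a + b)"
    "c (vec [0,0,0,0,1,0]) = - b" "c (vec [0,0,0,0,0,1]) = - b"
proof -
  have coord: "(\<Sum>v\<in>eight_vecs. c v * v i) = 0" for i
    using fun_cong[OF assms(1), of i] by (simp add: sum_fun_apply)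
  show "c (vec [1,0,0,0,0,0]) = - a" "c (vec [0,1,0,0,0,0]) = - a"
    "c (vec [0,0,1,0,0,0]) = - (a + b)" "c (vec [0,0,0,1,0,0]) = - (a + b)"
    "c (vec [0,0,0,0,1,0]) = - b" "c (vec [0,0,0,0,0,1]) = - b"
    using coord[of 0] coord[of 1] coord[of 2] coord[of 3] coord[of 4] coord[of 5]
    by (simp_all add: eight_vecs_def vec_apply a_def b_def numeral_eq_Suc eq_neg_iff_add_eq_0 algebra_simps)
qed

lemma eight_vecs_relation_weight:
  fixes c :: "(nat \<Rightarrow> 'a::field) \<Rightarrow> 'a"
  assumes rel: "(\<Sum>v\<in>eight_vecs. scal (c v) v) = 0" and "v0 \<in> eight_vecs" "c v0 \<noteq> 0"
  shows "5 \<le> card {v \<in> eight_vecs. c v \<noteq> 0}"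
proof -
  have weight: "5 \<le> card {v \<in> eight_vecs. c v \<noteq> 0}"
    if "Z \<subseteq> {v \<in> eight_vecs. c v \<noteq> 0}" "card Z = 5" for Z
    using card_mono[OF _ that(1)] that(2) by (simp add: eight_vecs_def)
  define a where "a = c (vec [1,1,1,1,0,0])"
  define b where "b = c (vec [0,0,1,1,1,1])"
  note coeffs = eight_vecs_relation_coeffs[OF rel, folded a_def b_def]
  consider "a \<noteq> 0" "b = 0" | "a \<noteq> 0" "b \<noteq> 0" | "a = 0" "b \<noteq> 0" | "a = 0" "b = 0" by blast
  then show ?thesis
  proof cases
    case 1
    then show ?thesis
      by (intro weight[of "{vec [1,1,1,1,0,0], vec [1,0,0,0,0,0], vec [0,1,0,0,0,0],
                              vec [0,0,1,0,0,0], vec [0,0,0,1,0,0]}"])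
        (auto simp: eight_vecs_def a_def coeffs)
  next
    case 2
    then show ?thesis
      by (intro weight[of "{vec [1,1,1,1,0,0], vec [0,0,1,1,1,1], vec [1,0,0,0,0,0],
                              vec [0,1,0,0,0,0], vec [0,0,0,0,1,0]}"])
        (auto simp: eight_vecs_def a_def b_def coeffs)
  next
    case 3
    then show ?thesis
      by (intro weight[of "{vec [0,0,1,1,1,1], vec [0,0,1,0,0,0], vec [0,0,0,1,0,0],
                              vec [0,0,0,0,1,0], vec [0,0,0,0,0,1]}"])
        (auto simp: eight_vecs_def b_def coeffs)
  next
    case 4
    then have False
      using \<open>v0 \<in> eight_vecs\<close> \<open>c v0 \<noteq> 0\<close> by (auto simp: eight_vecs_def a_def b_def coeffs)
    then show ?thesis ..
  qed
qed

lemma independent_if_subset_eight_vecs: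
  assumes "B \<subseteq> (eight_vecs :: (nat \<Rightarrow> 'a::field) set)" "card B \<le> 4"
  shows "V.independent B"
proof
  assume "V.dependent B"
  then obtain t u v0 where t: "finite t" "t \<subseteq> B" "(\<Sum>v\<in>t. scal (u v) v) = 0" "v0 \<in> t" "u v0 \<noteq> 0"
    unfolding V.dependent_explicit by blast
  define c where "c v = (if v \<in> t then u v else 0)" for v
  have "finite (eight_vecs :: (nat \<Rightarrow> 'a) set)" by (simp add: eight_vecs_def)
  have "(\<Sum>v\<in>eight_vecs. scal (c v) v) = (\<Sum>v\<in>t. scal (u v) v)"
    using t(2) assms(1) \<open>finite eight_vecs\<close>
    by (intro sum.mono_neutral_cong_right) (auto simp: c_def scal_def)
  then have "5 \<le> card {v \<in> eight_vecs. c v \<noteq> 0}"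
    using t assms(1) by (intro eight_vecs_relation_weight[of c v0]) (auto simp: c_def)
  moreover have "{v \<in> eight_vecs. c v \<noteq> 0} \<subseteq> B" using t(2) by (auto simp: c_def)
  then have "card {v \<in> eight_vecs. c v \<noteq> 0} \<le> card B"
    using assms(1) \<open>finite eight_vecs\<close> by (intro card_mono) (auto dest: finite_subset)
  ultimately show False using assms(2) by simp
qed

lemma admissible_mult_le_8_gf2:
  fixes K :: "(nat \<Rightarrow> 'a::{field,finite}) set \<Rightarrow> nat"
  assumes two: "card (UNIV :: 'a set) = 2" and adm: "admissible TYPE('a) 2 5 3 K"
  shows "mult_of K (PG_points 5) \<le> 8"
proof (cases "mult_of K (PG_points 5) \<le> 3")
  case False
  then have big: "2 + 2 \<le> mult_of K (PG_points 5)" by simp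
  have adm': "admissible TYPE('a) 2 5 (2 + 1) K" using adm by simp
  obtain X :: "(nat \<Rightarrow> 'a) set" where X: "X \<subseteq> vecs 5" "card X = mult_of K (PG_points 5)"
    "\<And>B. B \<subseteq> X \<Longrightarrow> card B \<le> 2 + 2 \<Longrightarrow> V.independent B"
    by (rule admissible_imp_general_position[OF adm' _ big]) simp_all
  have "card X \<le> 8"
    using two X(1) by (rule card_le_8_if_4_independent_gf2) (simp add: X(3))
  then show ?thesis using X(2) by simp
qed simp

lemma exists_admissible_mult_8:
  "\<exists>K. admissible TYPE('a::{field,finite}) 2 5 3 K \<and> mult_of K (PG_points 5) = 8"
proof -
  have indep: "V.independent B"
    if "B \<subseteq> (eight_vecs :: (nat \<Rightarrow> 'a) set)" "card B \<le> 2 + 2" for B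
    using that by (intro independent_if_subset_eight_vecs) simp_all
  obtain K where "admissible TYPE('a) 2 5 (2 + 1) K"
    "mult_of K (PG_points 5) = card (eight_vecs :: (nat \<Rightarrow> 'a) set)"
    using eight_vecs_subset_vecs indep by (rule general_position_imp_admissible)
  then show ?thesis using card_eight_vecs by auto
qed

theorem mainTheorem14:
  assumes "card (UNIV :: 'a set) = 2"
  shows "m_q TYPE('a::{field,finite}) 2 5 3 = 8"
proof -
  let ?S = "{mult_of K (PG_points 5) | K. admissible TYPE('a) 2 5 3 (K :: (nat \<Rightarrow> 'a) set \<Rightarrow> nat)}"
  have le: "x \<le> 8" if "x \<in> ?S" for x
    using that admissible_mult_le_8_gf2[OF assms] by auto
  moreover have "8 \<in> ?S" using exists_admissible_mult_8 by fastforce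
  moreover have "finite ?S" using le by (meson finite_nat_set_iff_bounded_le)
  ultimately have "Max ?S = 8" by (intro Max_eqI) auto
  then show ?thesis by (simp add: m_q_def)
qed

end
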